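(* The center of $U_3$ is $$Z(U_3)=\{(x_1+f_1,\,x_2,\,x_3)\mid f_1=f_1(x_2,x_3)\in S\}.$$
   Context: $K$ is a field of characteristic zero, $A_3=K\langle x_1,x_2,x_3\rangle$ the free associative $K$-algebra with unity. $U_3$ is the group of unitriangular automorphisms of $A_3$: all automorphisms $(x_1+f_1,\,x_2+f_2,\,x_3+f_3)$ (meaning $x_i\mapsto x_i+f_i$) with $f_1\in K\langle x_2,x_3\rangle$, $f_2\in K\langle x_3\rangle$, $f_3\in K$. $S=\{f\in K\langle x_2,x_3\rangle\mid f(x_2+g(x_3),\,x_3+h)=f(x_2,x_3)\text{ for all }g(x_3)\in K\langle x_3\rangle,\ h\in K\}$. *)

theory Defs
  imports "HOL-Library.FuncSet"
begin

text \<open>Free associative algebra A_3 = K<x_1,x_2,x_3>: a noncommutative polynomial is a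
finitely supported coefficient function on words (lists) over the variable indices 1,2,3.
Variable x_i is the one-letter word [i].\<close>

definition nc_polys :: "nat set \<Rightarrow> (nat list \<Rightarrow> 'k::zero) set" where
  "nc_polys V = {p. finite {w. p w \<noteq> 0} \<and> (\<forall>w. p w \<noteq> 0 \<longrightarrow> set w \<subseteq> V)}"

abbreviation A3 :: "(nat list \<Rightarrow> 'k::zero) set" where
  "A3 \<equiv> nc_polys {1,2,3}"

definition nc_zero :: "nat list \<Rightarrow> 'k::zero" where
  "nc_zero = (\<lambda>_. 0)"

definition nc_const :: "'k::zero \<Rightarrow> nat list \<Rightarrow> 'k" where
  "nc_const c = (\<lambda>w. if w = [] then c else 0)"

definition nc_var :: "nat \<Rightarrow> nat list \<Rightarrow> 'k::{zero,one}" where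
  "nc_var i = (\<lambda>w. if w = [i] then 1 else 0)"

definition nc_add :: "(nat list \<Rightarrow> 'k::plus) \<Rightarrow> (nat list \<Rightarrow> 'k) \<Rightarrow> nat list \<Rightarrow> 'k" where
  "nc_add p q = (\<lambda>w. p w + q w)"

definition nc_mult :: "(nat list \<Rightarrow> 'k::comm_semiring_1) \<Rightarrow> (nat list \<Rightarrow> 'k) \<Rightarrow> nat list \<Rightarrow> 'k" where
  "nc_mult p q = (\<lambda>w. \<Sum>i\<le>length w. p (take i w) * q (drop i w))"

definition nc_word_eval :: "(nat \<Rightarrow> nat list \<Rightarrow> 'k::comm_semiring_1) \<Rightarrow> nat list \<Rightarrow> nat list \<Rightarrow> 'k" where
  "nc_word_eval phi w = foldr (\<lambda>i acc. nc_mult (phi i) acc) w (nc_const 1)"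

definition nc_subst :: "(nat \<Rightarrow> nat list \<Rightarrow> 'k::comm_semiring_1) \<Rightarrow> (nat list \<Rightarrow> 'k) \<Rightarrow> nat list \<Rightarrow> 'k" where
  "nc_subst phi p = (\<lambda>v. \<Sum>w\<in>{w. p w \<noteq> 0}. p w * nc_word_eval phi w v)"

definition tri_map :: "(nat list \<Rightarrow> 'k::comm_semiring_1) \<Rightarrow> (nat list \<Rightarrow> 'k) \<Rightarrow> (nat list \<Rightarrow> 'k)
    \<Rightarrow> (nat list \<Rightarrow> 'k) \<Rightarrow> nat list \<Rightarrow> 'k" where
  "tri_map f1 f2 f3 = (\<lambda>p\<in>A3. nc_subst (\<lambda>i. if i = 1 then nc_add (nc_var 1) f1
                                        else if i = 2 then nc_add (nc_var 2) f2
                                        else nc_add (nc_var 3) f3) p)"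

definition U3 :: "((nat list \<Rightarrow> 'k::field_char_0) \<Rightarrow> (nat list \<Rightarrow> 'k)) set" where
  "U3 = {tri_map f1 f2 f3 | f1 f2 f3.
          f1 \<in> nc_polys {2,3} \<and> f2 \<in> nc_polys {3} \<and> f3 \<in> nc_polys {} \<and>
          bij_betw (tri_map f1 f2 f3) A3 A3}"

definition U3_center :: "((nat list \<Rightarrow> 'k::field_char_0) \<Rightarrow> (nat list \<Rightarrow> 'k)) set" where
  "U3_center = {\<alpha> \<in> U3. \<forall>\<beta>\<in>U3. compose A3 \<alpha> \<beta> = compose A3 \<beta> \<alpha>}"

definition S_inv :: "(nat list \<Rightarrow> 'k::field_char_0) set" where
  "S_inv = {f \<in> nc_polys {2,3}. \<forall>g\<in>nc_polys {3}. \<forall>h::'k.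
      nc_subst (\<lambda>i. if i = 2 then nc_add (nc_var 2) g
                    else if i = 3 then nc_add (nc_var 3) (nc_const h)
                    else nc_var i) f = f}"

end

theory Submission
  imports Defs
begin

text \<open>A triangular map commutes with (x_1 + c, x_2, x_3), c \<in> K<x_2,x_3>, exactly when it fixes c;
taking c = x_2 and c = x_3 forces f_2 = f_3 = 0. A map (x_1 + f_1, x_2, x_3) commutes with
(x_1 + b_1, x_2 + b_2, x_3 + b_3) exactly when (x_1 + b_1, \<dots>) fixes f_1, and since U_3 contains the
translations (x_1, x_2 + g(x_3), x_3) and (x_1, x_2, x_3 + h), whose composites realize every
substitution in the definition of S, this happens for all of U_3 exactly when f_1 \<in> S.
The algebraic backbone is that substitution is a multiplicative homomorphism, so that the
composite of two substitution endomorphisms is the substitution of the substituted images.\<close>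

abbreviation nc_finsupp :: "(nat list \<Rightarrow> 'k::zero) \<Rightarrow> bool" where
  "nc_finsupp p \<equiv> finite {w. p w \<noteq> 0}"

definition nc_monom :: "nat list \<Rightarrow> nat list \<Rightarrow> 'k::comm_semiring_1" where
  "nc_monom u = (\<lambda>w. if w = u then 1 else 0)"

lemma nc_monom_expansion:
  fixes p :: "nat list \<Rightarrow> 'k::comm_semiring_1"
  assumes "finite F" "{w. p w \<noteq> 0} \<subseteq> F"
  shows "p = (\<lambda>w. \<Sum>u\<in>F. p u * nc_monom u w)"
proof
  fix w
  have "(\<Sum>u\<in>F. p u * nc_monom u w) = (\<Sum>u\<in>F. if u = w then p u else 0)"
    by (rule sum.cong) (simp_all add: nc_monom_def)
  also have "\<dots> = p w"
    using assms by (subst sum.delta) auto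
  finally show "p w = (\<Sum>u\<in>F. p u * nc_monom u w)" by simp
qed

lemma finite_supp_nc_monom: "nc_finsupp (nc_monom u :: nat list \<Rightarrow> 'k::comm_semiring_1)"
  by (rule finite_subset[of _ "{u}"]) (auto simp: nc_monom_def)

lemma nc_const_one_eq_monom: "(nc_const 1 :: nat list \<Rightarrow> 'k::comm_semiring_1) = nc_monom []"
  by (auto simp: nc_const_def nc_monom_def)

lemma nc_var_eq_monom: "(nc_var i :: nat list \<Rightarrow> 'k::comm_semiring_1) = nc_monom [i]"
  by (auto simp: nc_var_def nc_monom_def)

lemma nc_mult_monom: "nc_mult (nc_monom u) (nc_monom v) = (nc_monom (u @ v) :: nat list \<Rightarrow> 'k::comm_semiring_1)"
proof
  fix w
  have "nc_monom u (take i w) * nc_monom v (drop i w)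
      = (if i = length u then nc_monom (u @ v) w else (0::'k))" if "i \<le> length w" for i
  proof -
    have "(take i w = u \<and> drop i w = v) \<longleftrightarrow> (i = length u \<and> w = u @ v)"
      using that by (metis append_eq_conv_conj length_take min.absorb2)
    moreover have "nc_monom u (take i w) * nc_monom v (drop i w)
        = (if take i w = u \<and> drop i w = v then 1 else (0::'k))"
      by (simp add: nc_monom_def)
    ultimately show ?thesis by (simp add: nc_monom_def)
  qed
  note monom_split = this
  have "nc_mult (nc_monom u) (nc_monom v) w
      = (\<Sum>i\<le>length w. if i = length u then nc_monom (u @ v) w else (0::'k))"
    unfolding nc_mult_def by (rule sum.cong[OF refl], rule monom_split) simp
  also have "\<dots> = nc_monom (u @ v) w"
    by (auto simp: nc_monom_def)
  finally show "nc_mult (nc_monom u) (nc_monom v) w = (nc_monom (u @ v) w :: 'k)" .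
qed

lemma nc_mult_sum_sum:
  fixes f :: "'a \<Rightarrow> nat list \<Rightarrow> 'k::comm_semiring_1" and g :: "'b \<Rightarrow> nat list \<Rightarrow> 'k"
  shows "nc_mult (\<lambda>w. \<Sum>x\<in>A. a x * f x w) (\<lambda>w. \<Sum>y\<in>B. b y * g y w)
       = (\<lambda>w. \<Sum>x\<in>A. \<Sum>y\<in>B. a x * b y * nc_mult (f x) (g y) w)"
proof
  fix w
  have "nc_mult (\<lambda>w. \<Sum>x\<in>A. a x * f x w) (\<lambda>w. \<Sum>y\<in>B. b y * g y w) w
      = (\<Sum>i\<le>length w. \<Sum>x\<in>A. \<Sum>y\<in>B. a x * b y * (f x (take i w) * g y (drop i w)))"
    unfolding nc_mult_def by (simp add: sum_product algebra_simps)
  also have "\<dots> = (\<Sum>x\<in>A. \<Sum>y\<in>B. \<Sum>i\<le>length w. a x * b y * (f x (take i w) * g y (drop i w)))"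
    by (subst sum.swap) (simp add: sum.swap[of _ "{..length w}"])
  also have "\<dots> = (\<Sum>x\<in>A. \<Sum>y\<in>B. a x * b y * nc_mult (f x) (g y) w)"
    unfolding nc_mult_def by (simp add: sum_distrib_left)
  finally show "nc_mult (\<lambda>w. \<Sum>x\<in>A. a x * f x w) (\<lambda>w. \<Sum>y\<in>B. b y * g y w) w
       = (\<Sum>x\<in>A. \<Sum>y\<in>B. a x * b y * nc_mult (f x) (g y) w)" .
qed

lemma nc_mult_monom_expansion:
  fixes p q :: "nat list \<Rightarrow> 'k::comm_semiring_1"
  assumes "finite P" "{w. p w \<noteq> 0} \<subseteq> P" "finite Q" "{w. q w \<noteq> 0} \<subseteq> Q"
  shows "nc_mult p q = (\<lambda>w. \<Sum>(u, v)\<in>P \<times> Q. p u * q v * nc_monom (u @ v) w)"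
proof -
  have "nc_mult p q
      = nc_mult (\<lambda>w. \<Sum>u\<in>P. p u * nc_monom u w) (\<lambda>w. \<Sum>v\<in>Q. q v * nc_monom v w)"
    using nc_monom_expansion[OF assms(1,2)] nc_monom_expansion[OF assms(3,4)] by metis
  then show ?thesis
    by (simp add: nc_mult_sum_sum nc_mult_monom sum.cartesian_product)
qed

lemma nc_mult_nonzeroE:
  fixes p q :: "nat list \<Rightarrow> 'k::comm_semiring_1"
  assumes "nc_mult p q w \<noteq> 0"
  obtains u v where "w = u @ v" "p u \<noteq> 0" "q v \<noteq> 0"
proof -
  from assms obtain i where "p (take i w) * q (drop i w) \<noteq> 0"
    unfolding nc_mult_def by (meson sum.not_neutral_contains_not_neutral)
  then show ?thesis using that by (metis append_take_drop_id mult_not_zero)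
qed

lemma finite_supp_nc_mult:
  fixes p q :: "nat list \<Rightarrow> 'k::comm_semiring_1"
  assumes "nc_finsupp p" "nc_finsupp q"
  shows "nc_finsupp (nc_mult p q)"
proof (rule finite_subset)
  show "{w. nc_mult p q w \<noteq> 0} \<subseteq> (\<lambda>(u, v). u @ v) ` ({u. p u \<noteq> 0} \<times> {v. q v \<noteq> 0})"
    by (auto elim!: nc_mult_nonzeroE)
qed (use assms in blast)

lemma nc_mult_assoc:
  fixes p q r :: "nat list \<Rightarrow> 'k::comm_semiring_1"
  assumes "nc_finsupp p" "nc_finsupp q" "nc_finsupp r"
  shows "nc_mult (nc_mult p q) r = nc_mult p (nc_mult q r)"
proof -
  define P Q R where "P = {w. p w \<noteq> 0}" and "Q = {w. q w \<noteq> 0}" and "R = {w. r w \<noteq> 0}"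
  have fin: "finite P" "finite Q" "finite R"
    using assms by (simp_all add: P_def Q_def R_def)
  have p_exp: "p = (\<lambda>w. \<Sum>u\<in>P. p u * nc_monom u w)"
    and r_exp: "r = (\<lambda>w. \<Sum>z\<in>R. r z * nc_monom z w)"
    by (rule nc_monom_expansion; use fin in \<open>simp add: P_def R_def\<close>)+
  have pq_exp: "nc_mult p q = (\<lambda>w. \<Sum>(u, v)\<in>P \<times> Q. p u * q v * nc_monom (u @ v) w)"
    and qr_exp: "nc_mult q r = (\<lambda>w. \<Sum>(v, z)\<in>Q \<times> R. q v * r z * nc_monom (v @ z) w)"
    by (rule nc_mult_monom_expansion; use fin in \<open>simp add: P_def Q_def R_def\<close>)+
  have "nc_mult (nc_mult p q) r
      = (\<lambda>w. \<Sum>x\<in>P \<times> Q. \<Sum>z\<in>R.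
              p (fst x) * q (snd x) * r z * nc_monom (fst x @ snd x @ z) w)"
    unfolding arg_cong2[where f=nc_mult, OF pq_exp r_exp]
    by (simp add: nc_mult_sum_sum nc_mult_monom case_prod_beta)
  also have "\<dots> = (\<lambda>w. \<Sum>u\<in>P. \<Sum>y\<in>Q \<times> R.
              p u * (q (fst y) * r (snd y)) * nc_monom (u @ fst y @ snd y) w)"
    by (simp only: sum.cartesian_product' fst_conv snd_conv mult.assoc)
  also have "\<dots> = nc_mult p (nc_mult q r)"
    unfolding arg_cong2[where f=nc_mult, OF p_exp qr_exp]
    by (simp add: nc_mult_sum_sum nc_mult_monom case_prod_beta)
  finally show ?thesis .
qed

lemma nc_mult_one_left: "nc_mult (nc_const 1) p = (p :: nat list \<Rightarrow> 'k::comm_semiring_1)"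
proof
  fix w
  have "nc_mult (nc_const 1) p w = (\<Sum>i\<le>length w. if i = 0 then p w else 0)"
    unfolding nc_mult_def by (rule sum.cong) (auto simp: nc_const_def)
  then show "nc_mult (nc_const 1) p w = p w" by simp
qed

lemma nc_mult_one_right: "nc_mult p (nc_const 1) = (p :: nat list \<Rightarrow> 'k::comm_semiring_1)"
proof
  fix w
  have "nc_mult p (nc_const 1) w = (\<Sum>i\<le>length w. if i = length w then p w else 0)"
    unfolding nc_mult_def by (rule sum.cong) (auto simp: nc_const_def)
  then show "nc_mult p (nc_const 1) w = p w" by simp
qed

lemma finite_supp_nc_const: "nc_finsupp (nc_const c)"
  by (rule finite_subset[of _ "{[]}"]) (auto simp: nc_const_def)

lemma nc_word_eval_Nil [simp]: "nc_word_eval phi [] = nc_const 1"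
  by (simp add: nc_word_eval_def)

lemma nc_word_eval_Cons [simp]: "nc_word_eval phi (a # w) = nc_mult (phi a) (nc_word_eval phi w)"
  by (simp add: nc_word_eval_def)

lemma finite_supp_nc_word_eval:
  fixes phi :: "nat \<Rightarrow> nat list \<Rightarrow> 'k::comm_semiring_1"
  assumes "\<forall>i. nc_finsupp (phi i)"
  shows "nc_finsupp (nc_word_eval phi w)"
  by (induction w) (simp_all add: finite_supp_nc_const finite_supp_nc_mult assms)

lemma nc_word_eval_append:
  fixes phi :: "nat \<Rightarrow> nat list \<Rightarrow> 'k::comm_semiring_1"
  assumes "\<forall>i. nc_finsupp (phi i)"
  shows "nc_word_eval phi (u @ v) = nc_mult (nc_word_eval phi u) (nc_word_eval phi v)"
  by (induction u)
    (simp_all add: nc_mult_one_left nc_mult_assoc finite_supp_nc_word_eval assms)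

lemma nc_word_eval_var: "nc_word_eval nc_var w = (nc_monom w :: nat list \<Rightarrow> 'k::comm_semiring_1)"
  by (induction w) (simp_all add: nc_const_one_eq_monom nc_var_eq_monom nc_mult_monom)

lemma nc_word_eval_cong: "set w \<subseteq> V \<Longrightarrow> \<forall>i\<in>V. phi i = psi i \<Longrightarrow> nc_word_eval phi w = nc_word_eval psi w"
  by (induction w) auto

lemma nc_subst_eq_sum:
  fixes p :: "nat list \<Rightarrow> 'k::comm_semiring_1"
  assumes "finite F" "{w. p w \<noteq> 0} \<subseteq> F"
  shows "nc_subst phi p = (\<lambda>v. \<Sum>w\<in>F. p w * nc_word_eval phi w v)"
  unfolding nc_subst_def
  by (rule ext, rule sum.mono_neutral_left) (use assms in auto)

lemma nc_subst_sum:
  fixes f :: "'a \<Rightarrow> nat list \<Rightarrow> 'k::comm_semiring_1"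
  assumes "finite A" "\<forall>x\<in>A. nc_finsupp (f x)"
  shows "nc_subst phi (\<lambda>w. \<Sum>x\<in>A. c x * f x w) = (\<lambda>v. \<Sum>x\<in>A. c x * nc_subst phi (f x) v)"
proof -
  define F where "F = (\<Union>x\<in>A. {w. f x w \<noteq> 0})"
  have "finite F" using assms by (simp add: F_def)
  have "{w. (\<Sum>x\<in>A. c x * f x w) \<noteq> 0} \<subseteq> F"
    by (auto simp: F_def dest: sum.not_neutral_contains_not_neutral)
  then have "nc_subst phi (\<lambda>w. \<Sum>x\<in>A. c x * f x w)
      = (\<lambda>v. \<Sum>w\<in>F. (\<Sum>x\<in>A. c x * f x w) * nc_word_eval phi w v)"
    using \<open>finite F\<close> by (rule nc_subst_eq_sum[rotated])
  also have "\<dots> = (\<lambda>v. \<Sum>x\<in>A. c x * (\<Sum>w\<in>F. f x w * nc_word_eval phi w v))"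
    by (simp add: sum_distrib_right sum_distrib_left mult.assoc sum.swap[of _ F])
  also have "\<dots> = (\<lambda>v. \<Sum>x\<in>A. c x * nc_subst phi (f x) v)"
  proof (intro ext sum.cong refl)
    fix v x assume "x \<in> A"
    then have supp_F: "{w. f x w \<noteq> 0} \<subseteq> F" by (auto simp: F_def)
    show "c x * (\<Sum>w\<in>F. f x w * nc_word_eval phi w v) = c x * nc_subst phi (f x) v"
      using nc_subst_eq_sum[OF \<open>finite F\<close> supp_F] by simp
  qed
  finally show ?thesis .
qed

lemma nc_subst_monom: "nc_subst phi (nc_monom u :: nat list \<Rightarrow> 'k::comm_semiring_1) = nc_word_eval phi u"
  by (subst nc_subst_eq_sum[of "{u}"]) (auto simp: nc_monom_def)

lemma nc_subst_mult:
  fixes p q :: "nat list \<Rightarrow> 'k::comm_semiring_1"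
  assumes "nc_finsupp p" "nc_finsupp q" "\<forall>i. nc_finsupp (phi i)"
  shows "nc_subst phi (nc_mult p q) = nc_mult (nc_subst phi p) (nc_subst phi q)"
proof -
  define P Q where "P = {w. p w \<noteq> 0}" and "Q = {w. q w \<noteq> 0}"
  have fin: "finite P" "finite Q" using assms by (simp_all add: P_def Q_def)
  have "nc_subst phi (nc_mult p q)
      = nc_subst phi (\<lambda>w. \<Sum>x\<in>P \<times> Q. p (fst x) * q (snd x) * nc_monom (fst x @ snd x) w)"
    by (subst nc_mult_monom_expansion[of P p Q q]) (simp_all add: assms(1,2) P_def Q_def case_prod_beta)
  also have "\<dots> = (\<lambda>v. \<Sum>x\<in>P \<times> Q. p (fst x) * q (snd x) * nc_subst phi (nc_monom (fst x @ snd x)) v)"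
    by (rule nc_subst_sum) (simp_all add: fin finite_supp_nc_monom)
  also have "\<dots> = (\<lambda>v. \<Sum>u\<in>P. \<Sum>w\<in>Q.
      p u * q w * nc_mult (nc_word_eval phi u) (nc_word_eval phi w) v)"
    by (simp add: sum.cartesian_product' nc_subst_monom nc_word_eval_append assms(3))
  also have "\<dots> = nc_mult (nc_subst phi p) (nc_subst phi q)"
    by (simp add: nc_mult_sum_sum nc_subst_eq_sum[OF fin(1)] nc_subst_eq_sum[OF fin(2)] P_def Q_def)
  finally show ?thesis .
qed

lemma nc_subst_word_eval:
  fixes phi psi :: "nat \<Rightarrow> nat list \<Rightarrow> 'k::comm_semiring_1"
  assumes "\<forall>i. nc_finsupp (phi i)" "\<forall>i. nc_finsupp (psi i)"
  shows "nc_subst psi (nc_word_eval phi w) = nc_word_eval (\<lambda>i. nc_subst psi (phi i)) w"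
  by (induction w)
    (simp_all add: nc_const_one_eq_monom nc_subst_monom nc_subst_mult finite_supp_nc_word_eval assms)

lemma nc_subst_nc_subst:
  fixes p :: "nat list \<Rightarrow> 'k::comm_semiring_1"
  assumes "nc_finsupp p" "\<forall>i. nc_finsupp (phi i)" "\<forall>i. nc_finsupp (psi i)"
  shows "nc_subst psi (nc_subst phi p) = nc_subst (\<lambda>i. nc_subst psi (phi i)) p"
proof -
  have "nc_subst psi (nc_subst phi p)
      = (\<lambda>v. \<Sum>w\<in>{w. p w \<noteq> 0}. p w * nc_subst psi (nc_word_eval phi w) v)"
    unfolding nc_subst_def[of phi]
    by (rule nc_subst_sum) (simp_all add: assms finite_supp_nc_word_eval)
  then show ?thesis
    by (simp add: nc_subst_word_eval assms nc_subst_def[of "\<lambda>i. nc_subst psi (phi i)"])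
qed

lemma nc_subst_cong:
  assumes "p \<in> nc_polys V" "\<forall>i\<in>V. phi i = psi i"
  shows "nc_subst phi p = nc_subst psi p"
  unfolding nc_subst_def
proof (intro ext sum.cong refl)
  fix v w assume "w \<in> {w. p w \<noteq> 0}"
  then have "set w \<subseteq> V" using assms(1) by (auto simp: nc_polys_def)
  then show "p w * nc_word_eval phi w v = p w * nc_word_eval psi w v"
    using nc_word_eval_cong assms(2) by metis
qed

lemma nc_subst_var_id:
  fixes p :: "nat list \<Rightarrow> 'k::comm_semiring_1"
  assumes "nc_finsupp p"
  shows "nc_subst nc_var p = p"
  using nc_monom_expansion[of "{w. p w \<noteq> 0}" p] assms
  by (simp add: nc_subst_eq_sum[OF assms] nc_word_eval_var)

lemma nc_subst_fixes:
  fixes p :: "nat list \<Rightarrow> 'k::comm_semiring_1"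
  assumes "p \<in> nc_polys V" "\<forall>i\<in>V. phi i = nc_var i"
  shows "nc_subst phi p = p"
proof -
  have "nc_finsupp p" using assms(1) by (simp add: nc_polys_def)
  then show ?thesis using nc_subst_cong[OF assms] nc_subst_var_id by simp
qed

lemma nc_subst_var: "nc_subst phi (nc_var i) = (phi i :: nat list \<Rightarrow> 'k::comm_semiring_1)"
  by (simp add: nc_var_eq_monom nc_subst_monom nc_mult_one_right)

lemma nc_subst_const: "nc_subst phi (nc_const c) = (nc_const c :: nat list \<Rightarrow> 'k::comm_semiring_1)"
  by (subst nc_subst_eq_sum[of "{[]}"]) (auto simp: nc_const_def)

lemma nc_subst_add:
  fixes p q :: "nat list \<Rightarrow> 'k::comm_semiring_1"
  assumes "nc_finsupp p" "nc_finsupp q"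
  shows "nc_subst phi (nc_add p q) = nc_add (nc_subst phi p) (nc_subst phi q)"
proof -
  define F where "F = {w. p w \<noteq> 0} \<union> {w. q w \<noteq> 0}"
  have F: "finite F" using assms by (simp add: F_def)
  have "nc_subst phi (nc_add p q) = (\<lambda>v. \<Sum>w\<in>F. nc_add p q w * nc_word_eval phi w v)"
    by (rule nc_subst_eq_sum[OF F]) (auto simp: F_def nc_add_def)
  also have "\<dots> = nc_add (\<lambda>v. \<Sum>w\<in>F. p w * nc_word_eval phi w v) (\<lambda>v. \<Sum>w\<in>F. q w * nc_word_eval phi w v)"
    by (simp add: nc_add_def distrib_right sum.distrib)
  also have "\<dots> = nc_add (nc_subst phi p) (nc_subst phi q)"
    by (simp add: nc_subst_eq_sum[OF F, of p] nc_subst_eq_sum[OF F, of q] F_def)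
  finally show ?thesis .
qed

lemma nc_subst_var_plus:
  fixes f :: "nat list \<Rightarrow> 'k::comm_semiring_1"
  assumes "nc_finsupp f"
  shows "nc_subst phi (nc_add (nc_var i) f) = nc_add (phi i) (nc_subst phi f)"
  using nc_subst_add[OF finite_supp_nc_monom assms] by (simp add: nc_var_eq_monom nc_subst_monom nc_mult_one_right)

lemma nc_polys_mono: "V \<subseteq> W \<Longrightarrow> nc_polys V \<subseteq> nc_polys W"
  by (auto simp: nc_polys_def)

lemma nc_polys_subset_A3: "V \<subseteq> {1,2,3} \<Longrightarrow> nc_polys V \<subseteq> A3"
  by (rule nc_polys_mono)

lemma nc_polys_finite_supp: "p \<in> nc_polys V \<Longrightarrow> nc_finsupp p"
  by (simp add: nc_polys_def)

lemma nc_mult_in_polys: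
  fixes p q :: "nat list \<Rightarrow> 'k::comm_semiring_1"
  assumes "p \<in> nc_polys V" "q \<in> nc_polys V"
  shows "nc_mult p q \<in> nc_polys V"
  using assms finite_supp_nc_mult[of p q]
  by (fastforce simp: nc_polys_def elim: nc_mult_nonzeroE)

lemma nc_const_in_polys: "nc_const c \<in> nc_polys V"
  using finite_supp_nc_const by (auto simp: nc_polys_def nc_const_def)

lemma nc_var_in_polys: "i \<in> V \<Longrightarrow> (nc_var i :: nat list \<Rightarrow> 'k::comm_semiring_1) \<in> nc_polys V"
  using finite_supp_nc_monom[of "[i]"] by (auto simp: nc_polys_def nc_var_eq_monom nc_monom_def)

lemma nc_zero_in_polys: "nc_zero \<in> nc_polys V"
  by (simp add: nc_polys_def nc_zero_def)

lemma nc_add_in_polys: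
  fixes p q :: "nat list \<Rightarrow> 'k::comm_semiring_1"
  assumes "p \<in> nc_polys V" "q \<in> nc_polys V"
  shows "nc_add p q \<in> nc_polys V"
proof -
  have "{w. nc_add p q w \<noteq> 0} \<subseteq> {w. p w \<noteq> 0} \<union> {w. q w \<noteq> 0}"
    by (auto simp: nc_add_def)
  with assms show ?thesis
    by (auto simp: nc_polys_def intro: finite_subset)
qed

definition nc_neg :: "(nat list \<Rightarrow> 'k::uminus) \<Rightarrow> nat list \<Rightarrow> 'k" where
  "nc_neg p = (\<lambda>w. - p w)"

lemma nc_neg_in_polys: "p \<in> nc_polys V \<Longrightarrow> nc_neg (p :: nat list \<Rightarrow> 'k::ab_group_add) \<in> nc_polys V"
  by (simp add: nc_polys_def nc_neg_def)

lemma nc_neg_neg [simp]: "nc_neg (nc_neg p) = (p :: nat list \<Rightarrow> 'k::ab_group_add)"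
  by (simp add: nc_neg_def)

lemma nc_neg_zero [simp]: "nc_neg nc_zero = (nc_zero :: nat list \<Rightarrow> 'k::ab_group_add)"
  by (simp add: nc_neg_def nc_zero_def)

lemma nc_add_zero_right [simp]: "nc_add p nc_zero = (p :: nat list \<Rightarrow> 'k::monoid_add)"
  by (simp add: nc_add_def nc_zero_def)

lemma nc_add_neg_cancel [simp]: "nc_add (nc_add p q) (nc_neg q) = (p :: nat list \<Rightarrow> 'k::ab_group_add)"
  by (simp add: nc_add_def nc_neg_def)

lemma nc_add_left_cancel: "nc_add p q = nc_add p r \<longleftrightarrow> q = (r :: nat list \<Rightarrow> 'k::cancel_semigroup_add)"
  by (auto simp: nc_add_def fun_eq_iff)

lemma nc_subst_neg:
  fixes p :: "nat list \<Rightarrow> 'k::comm_ring_1"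
  shows "nc_subst phi (nc_neg p) = nc_neg (nc_subst phi p)"
  by (simp add: nc_subst_def nc_neg_def sum_negf)

lemma nc_word_eval_in_polys:
  fixes phi :: "nat \<Rightarrow> nat list \<Rightarrow> 'k::comm_semiring_1"
  shows "\<forall>i\<in>set w. phi i \<in> nc_polys V \<Longrightarrow> nc_word_eval phi w \<in> nc_polys V"
  by (induction w) (simp_all add: nc_const_in_polys nc_mult_in_polys)

lemma nc_subst_in_polys:
  fixes p :: "nat list \<Rightarrow> 'k::comm_semiring_1"
  assumes p: "p \<in> nc_polys W" and phi: "\<forall>i\<in>W. phi i \<in> nc_polys V"
  shows "nc_subst phi p \<in> nc_polys V"
proof -
  define U where "U = (\<Union>w\<in>{w. p w \<noteq> 0}. {v. nc_word_eval phi w v \<noteq> 0})"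
  have eval_in: "nc_word_eval phi w \<in> nc_polys V" if "p w \<noteq> 0" for w
  proof (rule nc_word_eval_in_polys)
    have "set w \<subseteq> W" using p that by (simp add: nc_polys_def)
    then show "\<forall>i\<in>set w. phi i \<in> nc_polys V" using phi by blast
  qed
  have supp: "{v. nc_subst phi p v \<noteq> 0} \<subseteq> U"
  proof
    fix v assume "v \<in> {v. nc_subst phi p v \<noteq> 0}"
    then obtain w where "p w \<noteq> 0" "p w * nc_word_eval phi w v \<noteq> 0"
      unfolding nc_subst_def by (auto dest: sum.not_neutral_contains_not_neutral)
    then show "v \<in> U" by (auto simp: U_def)
  qed
  have "finite U"
    unfolding U_def using p eval_in by (intro finite_UN_I) (simp_all add: nc_polys_def)
  with supp have "nc_finsupp (nc_subst phi p)" by (rule finite_subset)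
  moreover have "set v \<subseteq> V" if "v \<in> U" for v
    using that eval_in unfolding U_def nc_polys_def by blast
  ultimately show ?thesis
    using supp unfolding nc_polys_def by blast
qed

definition tri_images :: "(nat list \<Rightarrow> 'k::comm_semiring_1) \<Rightarrow> (nat list \<Rightarrow> 'k) \<Rightarrow> (nat list \<Rightarrow> 'k)
    \<Rightarrow> nat \<Rightarrow> nat list \<Rightarrow> 'k" where
  "tri_images f1 f2 f3 i = (if i = 1 then nc_add (nc_var 1) f1
                           else if i = 2 then nc_add (nc_var 2) f2 else nc_add (nc_var 3) f3)"

lemma tri_images_simps [simp]:
  "tri_images f1 f2 f3 1 = nc_add (nc_var 1) f1"
  "tri_images f1 f2 f3 (Suc 0) = nc_add (nc_var 1) f1"
  "tri_images f1 f2 f3 2 = nc_add (nc_var 2) f2"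
  "tri_images f1 f2 f3 3 = nc_add (nc_var 3) f3"
  by (simp_all add: tri_images_def)

lemma tri_map_apply: "p \<in> A3 \<Longrightarrow> tri_map f1 f2 f3 p = nc_subst (tri_images f1 f2 f3) p"
  by (simp add: tri_map_def tri_images_def[abs_def])

lemma tri_images_in_A3:
  fixes f1 :: "nat list \<Rightarrow> 'k::comm_semiring_1"
  shows "f1 \<in> A3 \<Longrightarrow> f2 \<in> A3 \<Longrightarrow> f3 \<in> A3 \<Longrightarrow> tri_images f1 f2 f3 i \<in> A3"
  unfolding tri_images_def by (auto intro!: nc_add_in_polys nc_var_in_polys)

lemma tri_map_in_A3:
  fixes f1 :: "nat list \<Rightarrow> 'k::comm_semiring_1"
  assumes "f1 \<in> A3" "f2 \<in> A3" "f3 \<in> A3" "p \<in> A3"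
  shows "tri_map f1 f2 f3 p \<in> A3"
  unfolding tri_map_apply[OF assms(4)]
proof (rule nc_subst_in_polys[OF assms(4)])
  show "\<forall>i\<in>{1,2,3}. tri_images f1 f2 f3 i \<in> A3"
    using tri_images_in_A3[OF assms(1-3)] by blast
qed

lemma tri_map_tri_map:
  fixes f1 :: "nat list \<Rightarrow> 'k::comm_semiring_1"
  assumes f: "f1 \<in> A3" "f2 \<in> A3" "f3 \<in> A3" and g: "g1 \<in> A3" "g2 \<in> A3" "g3 \<in> A3"
    and p: "p \<in> A3"
  shows "tri_map f1 f2 f3 (tri_map g1 g2 g3 p)
       = nc_subst (\<lambda>i. nc_subst (tri_images f1 f2 f3) (tri_images g1 g2 g3 i)) p"
proof -
  have "\<forall>i. nc_finsupp (tri_images f1 f2 f3 i)" "\<forall>i. nc_finsupp (tri_images g1 g2 g3 i)"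
    using tri_images_in_A3 f g nc_polys_finite_supp by blast+
  then show ?thesis
    using tri_map_in_A3[OF g p] p nc_polys_finite_supp[OF p]
    by (simp add: tri_map_apply nc_subst_nc_subst)
qed

lemma tri_map_commute_iff:
  fixes f1 :: "nat list \<Rightarrow> 'k::comm_semiring_1"
  assumes f: "f1 \<in> A3" "f2 \<in> A3" "f3 \<in> A3" and b: "b1 \<in> A3" "b2 \<in> A3" "b3 \<in> A3"
  shows "compose A3 (tri_map f1 f2 f3) (tri_map b1 b2 b3) = compose A3 (tri_map b1 b2 b3) (tri_map f1 f2 f3)
     \<longleftrightarrow> (\<forall>i\<in>{1,2,3}. nc_subst (tri_images f1 f2 f3) (tri_images b1 b2 b3 i)
                      = nc_subst (tri_images b1 b2 b3) (tri_images f1 f2 f3 i))"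
    (is "?commute \<longleftrightarrow> ?on_vars")
proof
  assume ?commute
  show ?on_vars
  proof
    fix i :: nat assume "i \<in> {1,2,3}"
    then have var: "(nc_var i :: nat list \<Rightarrow> 'k) \<in> A3" by (rule nc_var_in_polys)
    have "tri_map f1 f2 f3 (tri_map b1 b2 b3 (nc_var i)) = tri_map b1 b2 b3 (tri_map f1 f2 f3 (nc_var i))"
      using fun_cong[OF \<open>?commute\<close>, of "nc_var i"] var by (simp add: compose_eq)
    then show "nc_subst (tri_images f1 f2 f3) (tri_images b1 b2 b3 i)
             = nc_subst (tri_images b1 b2 b3) (tri_images f1 f2 f3 i)"
      by (simp only: tri_map_tri_map[OF f b var] tri_map_tri_map[OF b f var] nc_subst_var)
  qed
next
  assume ?on_vars
  show ?commute
  proof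
    fix p
    show "compose A3 (tri_map f1 f2 f3) (tri_map b1 b2 b3) p = compose A3 (tri_map b1 b2 b3) (tri_map f1 f2 f3) p"
    proof (cases "p \<in> A3")
      case True
      then show ?thesis
        using nc_subst_cong[OF True \<open>?on_vars\<close>]
        by (simp add: compose_eq tri_map_tri_map[OF f b True] tri_map_tri_map[OF b f True])
    qed (simp add: compose_def)
  qed
qed

lemma tri_map_inverse:
  fixes f1 :: "nat list \<Rightarrow> 'k::comm_ring_1"
  assumes f: "f1 \<in> A3" "f2 \<in> A3" "f3 \<in> A3" and g: "g1 \<in> A3" "g2 \<in> A3" "g3 \<in> A3"
    and g_images: "nc_subst (tri_images f1 f2 f3) g1 = nc_neg f1" "nc_subst (tri_images f1 f2 f3) g2 = nc_neg f2"
      "nc_subst (tri_images f1 f2 f3) g3 = nc_neg f3"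
    and p: "p \<in> A3"
  shows "tri_map f1 f2 f3 (tri_map g1 g2 g3 p) = p"
proof -
  have "\<forall>i\<in>{1,2,3}. nc_subst (tri_images f1 f2 f3) (tri_images g1 g2 g3 i) = nc_var i"
    using g g_images
    by (auto simp: nc_subst_var_plus nc_polys_finite_supp nc_subst_var)
  then show ?thesis
    using nc_subst_fixes[OF p] by (simp add: tri_map_tri_map[OF f g p])
qed

text \<open>The inverse translates by the negatives.\<close>
lemma bij_tri_map_translation:
  fixes f1 :: "nat list \<Rightarrow> 'k::comm_ring_1"
  assumes V: "V \<subseteq> {1,2,3}" and f: "f1 \<in> nc_polys V" "f2 \<in> nc_polys V" "f3 \<in> nc_polys V"
    and fixed: "1 \<in> V \<Longrightarrow> f1 = nc_zero" "2 \<in> V \<Longrightarrow> f2 = nc_zero" "3 \<in> V \<Longrightarrow> f3 = nc_zero"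
  shows "bij_betw (tri_map f1 f2 f3) A3 A3"
proof -
  have fA: "f1 \<in> A3" "f2 \<in> A3" "f3 \<in> A3" and nfA: "nc_neg f1 \<in> A3" "nc_neg f2 \<in> A3" "nc_neg f3 \<in> A3"
    using f nc_polys_mono[OF V] nc_neg_in_polys by blast+
  have "\<forall>j\<in>V. tri_images f1 f2 f3 j = nc_var j"
    and "\<forall>j\<in>V. tri_images (nc_neg f1) (nc_neg f2) (nc_neg f3) j = nc_var j"
    using V fixed by auto
  note fixed_by_f = nc_subst_fixes[OF _ this(1)] and fixed_by_neg_f = nc_subst_fixes[OF _ this(2)]
  show ?thesis
  proof (rule bij_betw_byWitness[where f'="tri_map (nc_neg f1) (nc_neg f2) (nc_neg f3)"])
    show "\<forall>p\<in>A3. tri_map (nc_neg f1) (nc_neg f2) (nc_neg f3) (tri_map f1 f2 f3 p) = p"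
      using f by (intro ballI tri_map_inverse[OF nfA fA]) (simp_all add: fixed_by_neg_f)
    show "\<forall>p\<in>A3. tri_map f1 f2 f3 (tri_map (nc_neg f1) (nc_neg f2) (nc_neg f3) p) = p"
      using f by (intro ballI tri_map_inverse[OF fA nfA]) (simp_all add: nc_subst_neg fixed_by_f)
    show "tri_map f1 f2 f3 ` A3 \<subseteq> A3" "tri_map (nc_neg f1) (nc_neg f2) (nc_neg f3) ` A3 \<subseteq> A3"
      using tri_map_in_A3 fA nfA by blast+
  qed
qed

lemma tri_map_in_U3I:
  "f1 \<in> nc_polys {2,3} \<Longrightarrow> f2 \<in> nc_polys {3} \<Longrightarrow> f3 \<in> nc_polys {} \<Longrightarrow>
    bij_betw (tri_map f1 f2 f3) A3 A3 \<Longrightarrow> tri_map f1 f2 f3 \<in> U3"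
  unfolding U3_def by blast

lemma x1_translation_in_U3:
  fixes c :: "nat list \<Rightarrow> 'k::field_char_0"
  assumes "c \<in> nc_polys {2,3}"
  shows "tri_map c nc_zero nc_zero \<in> U3"
  using assms by (intro tri_map_in_U3I bij_tri_map_translation[of "{2,3}"]) (auto simp: nc_zero_in_polys)

lemma x2_translation_in_U3:
  fixes g :: "nat list \<Rightarrow> 'k::field_char_0"
  assumes "g \<in> nc_polys {3}"
  shows "tri_map nc_zero g nc_zero \<in> U3"
proof (intro tri_map_in_U3I bij_tri_map_translation[of "{1,3}"])
  show "g \<in> nc_polys {1,3}" using assms nc_polys_mono[of "{3}" "{1,3}"] by blast
qed (use assms in \<open>auto simp: nc_zero_in_polys\<close>)

lemma x3_translation_in_U3: "tri_map nc_zero nc_zero (nc_const h :: nat list \<Rightarrow> 'k::field_char_0) \<in> U3"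
  by (intro tri_map_in_U3I bij_tri_map_translation[of "{1,2}"])
    (auto simp: nc_zero_in_polys nc_const_in_polys)

lemma commute_x1_translation_fixes:
  fixes f1 :: "nat list \<Rightarrow> 'k::comm_ring_1"
  assumes f: "f1 \<in> nc_polys {2,3}" "f2 \<in> A3" "f3 \<in> A3" and c: "c \<in> nc_polys {2,3}"
    and commute: "compose A3 (tri_map f1 f2 f3) (tri_map c nc_zero nc_zero)
       = compose A3 (tri_map c nc_zero nc_zero) (tri_map f1 f2 f3)"
  shows "nc_subst (tri_images f1 f2 f3) c = c"
proof -
  have A3: "f1 \<in> A3" "c \<in> A3" "nc_zero \<in> A3"
    using f(1) c nc_polys_subset_A3[of "{2,3}"] nc_zero_in_polys by auto
  have "nc_subst (tri_images f1 f2 f3) (tri_images c nc_zero nc_zero 1)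
      = nc_subst (tri_images c nc_zero nc_zero) (tri_images f1 f2 f3 1)"
    using commute tri_map_commute_iff[OF A3(1) f(2,3) A3(2,3,3)] by blast
  moreover have "nc_subst (tri_images c nc_zero nc_zero) f1 = f1"
    by (rule nc_subst_fixes[OF f(1)]) simp
  ultimately have "nc_add (nc_add (nc_var 1) f1) (nc_subst (tri_images f1 f2 f3) c)
      = nc_add (nc_add (nc_var 1) c) f1"
    using nc_polys_finite_supp[OF c] nc_polys_finite_supp[OF f(1)]
    by (simp only: tri_images_simps nc_subst_var_plus nc_subst_var)
  also have "\<dots> = nc_add (nc_add (nc_var 1) f1) c"
    by (simp add: nc_add_def add_ac)
  finally show ?thesis by (simp only: nc_add_left_cancel)
qed

lemma commute_x1_stable_fixes:
  fixes f1 :: "nat list \<Rightarrow> 'k::comm_ring_1"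
  assumes f: "f1 \<in> A3" "f2 \<in> A3" "f3 \<in> A3" and b: "b2 \<in> A3" "b3 \<in> A3"
    and commute: "compose A3 (tri_map f1 f2 f3) (tri_map nc_zero b2 b3)
       = compose A3 (tri_map nc_zero b2 b3) (tri_map f1 f2 f3)"
  shows "nc_subst (tri_images nc_zero b2 b3) f1 = f1"
proof -
  have "nc_subst (tri_images f1 f2 f3) (tri_images nc_zero b2 b3 1)
      = nc_subst (tri_images nc_zero b2 b3) (tri_images f1 f2 f3 1)"
    using commute tri_map_commute_iff[OF f nc_zero_in_polys b] by blast
  then have "nc_add (nc_var 1) f1 = nc_add (nc_var 1) (nc_subst (tri_images nc_zero b2 b3) f1)"
    using nc_polys_finite_supp[OF f(1)]
    by (simp only: tri_images_simps nc_add_zero_right nc_subst_var nc_subst_var_plus)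
  then show ?thesis by (simp only: nc_add_left_cancel)
qed

text \<open>The substitution in the definition of S is the composite of a translation of x_2 and one of x_3.\<close>
lemma S_invI:
  fixes f :: "nat list \<Rightarrow> 'k::field_char_0"
  assumes f: "f \<in> nc_polys {2,3}"
    and fixed_x2: "\<And>g. g \<in> nc_polys {3} \<Longrightarrow> nc_subst (tri_images nc_zero g nc_zero) f = f"
    and fixed_x3: "\<And>h. nc_subst (tri_images nc_zero nc_zero (nc_const h)) f = f"
  shows "f \<in> S_inv"
  unfolding S_inv_def
proof (intro CollectI conjI ballI allI f)
  fix g :: "nat list \<Rightarrow> 'k" and h :: 'k
  assume g: "g \<in> nc_polys {3}"
  have "g \<in> A3" using g nc_polys_subset_A3[of "{3}"] by auto
  then have "\<forall>i. tri_images nc_zero g nc_zero i \<in> A3"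
    "\<forall>i. tri_images nc_zero nc_zero (nc_const h) i \<in> A3"
    using tri_images_in_A3 nc_zero_in_polys nc_const_in_polys by blast+
  then have fin: "nc_finsupp f" "\<forall>i. nc_finsupp (tri_images nc_zero g nc_zero i)"
    "\<forall>i. nc_finsupp (tri_images nc_zero nc_zero (nc_const h) i)"
    using f nc_polys_finite_supp by blast+
  have "nc_subst (\<lambda>i. if i = 2 then nc_add (nc_var 2) g
                     else if i = 3 then nc_add (nc_var 3) (nc_const h) else nc_var i) f
      = nc_subst (\<lambda>i. nc_subst (tri_images nc_zero g nc_zero) (tri_images nc_zero nc_zero (nc_const h) i)) f"
    using fin(2) by (intro nc_subst_cong[OF f])
      (auto simp: nc_subst_var_plus nc_subst_var nc_subst_const finite_supp_nc_const)
  also have "\<dots> = nc_subst (tri_images nc_zero g nc_zero) (nc_subst (tri_images nc_zero nc_zero (nc_const h)) f)"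
    using fin by (simp add: nc_subst_nc_subst)
  also have "\<dots> = f"
    by (simp add: fixed_x2[OF g] fixed_x3)
  finally show "nc_subst (\<lambda>i. if i = 2 then nc_add (nc_var 2) g
                     else if i = 3 then nc_add (nc_var 3) (nc_const h) else nc_var i) f = f" .
qed

lemma nc_polys_empty_eq_const: "p \<in> nc_polys {} \<Longrightarrow> p = nc_const (p [])"
  by (rule ext) (auto simp: nc_polys_def nc_const_def)

lemma S_inv_fixed:
  fixes f :: "nat list \<Rightarrow> 'k::field_char_0"
  assumes "f \<in> S_inv" "b2 \<in> nc_polys {3}" "b3 \<in> nc_polys {}"
  shows "nc_subst (tri_images b1 b2 b3) f = f"
proof -
  have f: "f \<in> nc_polys {2,3}" using assms(1) by (simp add: S_inv_def)
  have "b3 = nc_const (b3 [])"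
    using assms(3) by (rule nc_polys_empty_eq_const)
  then have "nc_subst (tri_images b1 b2 b3) f
      = nc_subst (\<lambda>i. if i = 2 then nc_add (nc_var 2) b2
                     else if i = 3 then nc_add (nc_var 3) (nc_const (b3 [])) else nc_var i) f"
    by (intro nc_subst_cong[OF f]) auto
  then show ?thesis
    using assms(1,2) by (simp add: S_inv_def)
qed

lemma U3_center_subset:
  fixes \<alpha> :: "(nat list \<Rightarrow> 'k::field_char_0) \<Rightarrow> (nat list \<Rightarrow> 'k)"
  assumes "\<alpha> \<in> U3_center"
  obtains f1 where "f1 \<in> S_inv" "\<alpha> = tri_map f1 nc_zero nc_zero"
proof -
  obtain f1 f2 f3 where \<alpha>: "\<alpha> = tri_map f1 f2 f3" and f1: "f1 \<in> nc_polys {2,3}"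
    and f2: "f2 \<in> nc_polys {3}" and f3: "f3 \<in> nc_polys {}"
    and commute: "\<And>\<beta>. \<beta> \<in> U3 \<Longrightarrow> compose A3 \<alpha> \<beta> = compose A3 \<beta> \<alpha>"
    using assms unfolding U3_center_def U3_def by blast
  have A3: "f1 \<in> A3" "f2 \<in> A3" "f3 \<in> A3"
    using f1 f2 f3 nc_polys_subset_A3 by auto
  have "nc_subst (tri_images f1 f2 f3) (nc_var i) = nc_var i" if "i \<in> {2,3}" for i
  proof (rule commute_x1_translation_fixes[OF f1 A3(2,3)])
    show var: "(nc_var i :: nat list \<Rightarrow> 'k) \<in> nc_polys {2,3}" using that by (rule nc_var_in_polys)
    show "compose A3 (tri_map f1 f2 f3) (tri_map (nc_var i) nc_zero nc_zero)
        = compose A3 (tri_map (nc_var i) nc_zero nc_zero) (tri_map f1 f2 f3)"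
      using commute[OF x1_translation_in_U3[OF var]] \<alpha> by simp
  qed
  from this[of 2] this[of 3]
  have "nc_add (nc_var 2) f2 = nc_add (nc_var 2) nc_zero" "nc_add (nc_var 3) f3 = nc_add (nc_var 3) nc_zero"
    by (simp_all add: nc_subst_var)
  then have f23: "f2 = nc_zero" "f3 = nc_zero"
    by (simp_all only: nc_add_left_cancel)
  have "f1 \<in> S_inv"
  proof (rule S_invI[OF f1])
    fix g :: "nat list \<Rightarrow> 'k" assume "g \<in> nc_polys {3}"
    then show "nc_subst (tri_images nc_zero g nc_zero) f1 = f1"
      using commute[OF x2_translation_in_U3] \<alpha> nc_polys_subset_A3[of "{3}"]
      by (intro commute_x1_stable_fixes[OF A3(1-3)]) (auto simp: A3 nc_zero_in_polys)
  next
    fix h :: 'k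
    show "nc_subst (tri_images nc_zero nc_zero (nc_const h)) f1 = f1"
      using commute[OF x3_translation_in_U3] \<alpha>
      by (intro commute_x1_stable_fixes[OF A3(1-3)]) (auto simp: A3 nc_zero_in_polys nc_const_in_polys)
  qed
  with \<alpha> f23 show ?thesis using that by blast
qed

lemma U3_center_superset:
  fixes f1 :: "nat list \<Rightarrow> 'k::field_char_0"
  assumes S: "f1 \<in> S_inv"
  shows "tri_map f1 nc_zero nc_zero \<in> U3_center"
proof -
  have f1: "f1 \<in> nc_polys {2,3}" using S by (simp add: S_inv_def)
  have A3: "f1 \<in> A3" "(nc_zero :: nat list \<Rightarrow> 'k) \<in> A3"
    using f1 nc_polys_subset_A3[of "{2,3}"] nc_zero_in_polys by auto
  have "compose A3 (tri_map f1 nc_zero nc_zero) \<beta> = compose A3 \<beta> (tri_map f1 nc_zero nc_zero)"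
    if "\<beta> \<in> U3" for \<beta>
  proof -
    obtain b1 b2 b3 where \<beta>: "\<beta> = tri_map b1 b2 b3" and b: "b1 \<in> nc_polys {2,3}"
      "b2 \<in> nc_polys {3}" "b3 \<in> nc_polys {}"
      using \<open>\<beta> \<in> U3\<close> unfolding U3_def by blast
    have bA3: "b1 \<in> A3" "b2 \<in> A3" "b3 \<in> A3"
      using b nc_polys_subset_A3 by auto
    have fin: "nc_finsupp f1" "nc_finsupp b1" "nc_finsupp b2" "nc_finsupp b3"
      using A3 bA3 nc_polys_finite_supp by blast+
    have fixed_by_f: "nc_subst (tri_images f1 nc_zero nc_zero) b = b" if "b \<in> nc_polys {2,3}" for b
      using that by (rule nc_subst_fixes) simp
    have b23: "b2 \<in> nc_polys {2,3}" "b3 \<in> nc_polys {2,3}"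
      using b(2,3) nc_polys_mono[of "{3}" "{2,3}"] nc_polys_mono[of "{}" "{2,3}"] by auto
    have "nc_subst (tri_images f1 nc_zero nc_zero) (tri_images b1 b2 b3 1) = nc_add (nc_add (nc_var 1) f1) b1"
      by (simp add: nc_subst_var_plus fin fixed_by_f[OF b(1)])
    moreover have "nc_subst (tri_images b1 b2 b3) (tri_images f1 nc_zero nc_zero 1)
        = nc_add (nc_add (nc_var 1) b1) f1"
      by (simp add: nc_subst_var_plus fin S_inv_fixed[OF S b(2,3)])
    ultimately have "\<forall>i\<in>{1,2,3}. nc_subst (tri_images f1 nc_zero nc_zero) (tri_images b1 b2 b3 i)
                    = nc_subst (tri_images b1 b2 b3) (tri_images f1 nc_zero nc_zero i)"
      by (simp add: nc_subst_var_plus nc_subst_var fin fixed_by_f b23)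
        (simp add: nc_add_def add_ac)
    then show ?thesis
      unfolding \<beta> by (rule tri_map_commute_iff[OF A3(1,2,2) bA3, THEN iffD2])
  qed
  then show ?thesis
    unfolding U3_center_def using x1_translation_in_U3[OF f1] by blast
qed

theorem theorem1:
  shows "(U3_center :: ((nat list \<Rightarrow> 'k::field_char_0) \<Rightarrow> (nat list \<Rightarrow> 'k)) set)
           = {tri_map f1 nc_zero nc_zero | f1. f1 \<in> S_inv}"
  by (blast elim: U3_center_subset intro: U3_center_superset)
end
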